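(* Let $m$ be an odd natural number and $\underline R_m=N_{D_2}^{D_{2m}}\underline{\mathbb Z}$. Then $\underline R_m(D_{2m}/D_{2m})$ is a free abelian group \[ \underline R_m(D_{2m}/D_{2m})\cong\mathbb Z\{[D_{2m}/D_{2k}]\mid k\text{ divides }m\}.\] Under the quotient map $\underline A^{D_{2m}}\to\underline R_m$, the image of $[D_{2m}/D_{2k}]$ is $[D_{2m}/D_{2k}]$ and the image of $[D_{2m}/\mu_k]$ is $2[D_{2m}/D_{2k}]$.
   Context: $D_{2m}=\langle\tau,\zeta_m\mid\tau^2=\zeta_m^m=(\tau\zeta_m)^2=1\rangle$, $D_2=\langle\tau\rangle$, $\mu_k=\langle\zeta_k\rangle$, $D_{2k}=\langle\tau,\zeta_k\rangle$ for $k\mid m$. $\underline{\mathbb Z}$ is the constant $D_2$-Mackey functor, and Mackey norms are $N_H^G\underline M=\underline\pi_0^GN_H^GH\underline M$; there is an isomorphism $N_{D_2}^{D_{2m}}\underline{\mathbb Z}\cong\underline A^{D_{2m}}/(2-[D_{2m}/\mu_m])$, the quotient of the Burnside Mackey functor by the congruence generated by $2-[D_{2m}/\mu_m]$, and the quotient map refers to this presentation. $[T]$ denotes the class of a finite $D_{2m}$-set $T$ in the Burnside ring $\underline A^{D_{2m}}(D_{2m}/D_{2m})$. *)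

theory Defs
  imports "HOL-Algebra.Algebra"
begin

text \<open>Convention: an element of the Burnside ring A(H) of a subgroup H of G is
represented by its mark function L \<mapsto> |X^L| (L ranging over subgroups of H; value 0
elsewhere).  The mark homomorphism is injective, so this is a faithful model of A(H).\<close>

definition subgrps :: "('a,'b) monoid_scheme \<Rightarrow> 'a set \<Rightarrow> 'a set set" where
  "subgrps G H = {K. K \<subseteq> H \<and> subgroup K G}"

definition conjset :: "('a,'b) monoid_scheme \<Rightarrow> 'a \<Rightarrow> 'a set \<Rightarrow> 'a set" where
  "conjset G g S = (\<lambda>s. g \<otimes>\<^bsub>G\<^esub> s \<otimes>\<^bsub>G\<^esub> inv\<^bsub>G\<^esub> g) ` S"

definition mark :: "('a,'b) monoid_scheme \<Rightarrow> 'a set \<Rightarrow> 'a set \<Rightarrow> 'a set \<Rightarrow> nat" where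
  "mark G H K L = card {C. (\<exists>h\<in>H. C = h <#\<^bsub>G\<^esub> K) \<and> (\<forall>l\<in>L. l <#\<^bsub>G\<^esub> C = C)}"

definition cls :: "('a,'b) monoid_scheme \<Rightarrow> 'a set \<Rightarrow> 'a set \<Rightarrow> 'a set \<Rightarrow> int" where
  "cls G H K = (\<lambda>L. if L \<in> subgrps G H then int (mark G H K L) else 0)"

definition burnside :: "('a,'b) monoid_scheme \<Rightarrow> 'a set \<Rightarrow> ('a set \<Rightarrow> int) set" where
  "burnside G H = {f. \<exists>c. f = (\<lambda>L. \<Sum>K\<in>subgrps G H. c K * cls G H K L)}"

definition res :: "('a,'b) monoid_scheme \<Rightarrow> 'a set \<Rightarrow> ('a set \<Rightarrow> int) \<Rightarrow> ('a set \<Rightarrow> int)" where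
  "res G K f = (\<lambda>L. if L \<in> subgrps G K then f L else 0)"

definition conjB :: "('a,'b) monoid_scheme \<Rightarrow> 'a set \<Rightarrow> 'a \<Rightarrow> ('a set \<Rightarrow> int) \<Rightarrow> ('a set \<Rightarrow> int)" where
  "conjB G H g f = (\<lambda>L. if L \<in> subgrps G (conjset G g H) then f (conjset G (inv\<^bsub>G\<^esub> g) L) else 0)"

text \<open>transfer (induction) tr_K^H : A(K) \<rightarrow> A(H), mark formula
  phi_L(H \<times>_K X) = sum over cosets hK with L \<subseteq> hKh^-1 of phi_{h^-1 L h}(X)\<close>
definition tr :: "('a,'b) monoid_scheme \<Rightarrow> 'a set \<Rightarrow> 'a set \<Rightarrow> ('a set \<Rightarrow> int) \<Rightarrow> ('a set \<Rightarrow> int)" where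
  "tr G K H f = (\<lambda>L. if L \<in> subgrps G H then
      (\<Sum>h\<in>{h\<in>H. L \<subseteq> conjset G h K}. f (conjset G (inv\<^bsub>G\<^esub> h) L)) div int (card K) else 0)"

text \<open>The ideal (congruence) of the Burnside Mackey functor generated by an element x of
A(G/G): pairs (H, f) with f in the ideal at level G/H.\<close>
inductive_set mackey_ideal :: "('a,'b) monoid_scheme \<Rightarrow> ('a set \<Rightarrow> int) \<Rightarrow> ('a set \<times> ('a set \<Rightarrow> int)) set"
  for G x where
  base: "(carrier G, x) \<in> mackey_ideal G x"
| add: "(H, f) \<in> mackey_ideal G x \<Longrightarrow> (H, g) \<in> mackey_ideal G x \<Longrightarrow> (H, \<lambda>L. f L + g L) \<in> mackey_ideal G x"
| neg: "(H, f) \<in> mackey_ideal G x \<Longrightarrow> (H, \<lambda>L. - f L) \<in> mackey_ideal G x"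
| mult: "(H, f) \<in> mackey_ideal G x \<Longrightarrow> a \<in> burnside G H \<Longrightarrow> (H, \<lambda>L. a L * f L) \<in> mackey_ideal G x"
| restr: "(H, f) \<in> mackey_ideal G x \<Longrightarrow> K \<in> subgrps G H \<Longrightarrow> (K, res G K f) \<in> mackey_ideal G x"
| transf: "(K, f) \<in> mackey_ideal G x \<Longrightarrow> K \<in> subgrps G H \<Longrightarrow> H \<in> subgrps G (carrier G)
           \<Longrightarrow> (H, tr G K H f) \<in> mackey_ideal G x"
| conjg: "(H, f) \<in> mackey_ideal G x \<Longrightarrow> g \<in> carrier G \<Longrightarrow> (conjset G g H, conjB G H g f) \<in> mackey_ideal G x"

text \<open>(j, e) stands for zeta_m^j tau^e, with tau zeta = zeta^-1 tau.\<close>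
definition dihedral :: "nat \<Rightarrow> (nat \<times> bool) monoid" where
  "dihedral m = (| carrier = {0..<m} \<times> UNIV,
      monoid.mult = (\<lambda>a b. ((if snd a then fst a + m - fst b else fst a + fst b) mod m, snd a \<noteq> snd b)),
      monoid.one = (0, False) |)"

text \<open>mu_k = < zeta_k > with zeta_k = zeta_m^(m/k), for k dividing m\<close>
definition mu :: "nat \<Rightarrow> nat \<Rightarrow> (nat \<times> bool) set" where
  "mu m k = {(j, False) | j. j < m \<and> (m div k) dvd j}"

text \<open>D_{2k} = < tau, zeta_k >\<close>
definition dih :: "nat \<Rightarrow> nat \<Rightarrow> (nat \<times> bool) set" where
  "dih m k = {(j, e) | j e. j < m \<and> (m div k) dvd j}"

end

theory Submission
  imports Defs
begin

(*
  In mark coordinates the relation x = 2[G/G] - [G/\<mu>_m] vanishes on the rotation subgroups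
  and equals 2 on every subgroup containing a reflection. Hence [G/D_2k] * x = 2[G/D_2k] - [G/\<mu>_k],
  and since for odd m every subgroup of D_2m is either some \<mu>_k or conjugate to some D_2k,
  every element of the Burnside ring is congruent to an integral combination of the [G/D_2k].
  Conversely, every element of the Mackey ideal generated by x, at every level, vanishes at the
  normal subgroups \<mu>_d (products, restriction, transfer and conjugation only evaluate at
  conjugates of \<mu>_d), while the marks of the [G/D_2k] at the \<mu>_d form a triangular matrix
  with nonzero diagonal; this gives uniqueness of the coefficients.
*)

(* In ASCII, <# also denotes strict multiset inclusion; free it for left cosets. *)
no_notation (ASCII) subset_mset (infix \<open><#\<close> 50)

section \<open>Marks of transitive G-sets\<close>

lemma (in group) inv_mult_cancel_left [simp]:
  "x \<in> carrier G \<Longrightarrow> y \<in> carrier G \<Longrightarrow> inv x \<otimes> (x \<otimes> y) = y"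
  "x \<in> carrier G \<Longrightarrow> y \<in> carrier G \<Longrightarrow> x \<otimes> (inv x \<otimes> y) = y"
  by (simp_all add: m_assoc[symmetric])

lemma (in group) l_coset_eq_iff:
  assumes "subgroup K G" "a \<in> carrier G" "b \<in> carrier G"
  shows "a <# K = b <# K \<longleftrightarrow> inv b \<otimes> a \<in> K"
proof
  assume "a <# K = b <# K"
  then have "a \<in> b <# K" using lcos_self[OF assms(2,1)] by simp
  then show "inv b \<otimes> a \<in> K" using subgroup.lcos_module_imp[OF assms(1) is_group assms(3)] by blast
next
  assume "inv b \<otimes> a \<in> K"
  then have "a \<in> b <# K" using subgroup.lcos_module_rev[OF assms(1) is_group assms(3,2)] by blast
  then show "a <# K = b <# K" using l_repr_independence[OF _ assms(3,1)] by simp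
qed

lemma (in group) l_coset_fixed_iff:
  assumes "subgroup K G" "h \<in> carrier G" "l \<in> carrier G"
  shows "l <# (h <# K) = h <# K \<longleftrightarrow> inv h \<otimes> l \<otimes> h \<in> K"
  using lcos_m_assoc[OF subgroup.subset[OF assms(1)] assms(3,2)] l_coset_eq_iff[OF assms(1) _ assms(2)] assms
  by (simp add: m_assoc)

lemma (in group) mark_uniform:
  assumes "subgroup K G" "L \<subseteq> carrier G"
    and "\<And>h. h \<in> carrier G \<Longrightarrow> (\<forall>l\<in>L. inv h \<otimes> l \<otimes> h \<in> K) \<longleftrightarrow> P"
  shows "mark G (carrier G) K L = (if P then card (lcosets K) else 0)"
proof -
  have "(\<forall>l\<in>L. l <# (h <# K) = h <# K) \<longleftrightarrow> P" if "h \<in> carrier G" for h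
    using l_coset_fixed_iff[OF assms(1) that] assms(2) assms(3)[OF that] by blast
  then have "{C. (\<exists>h\<in>carrier G. C = h <# K) \<and> (\<forall>l\<in>L. l <# C = C)} = (if P then lcosets K else {})"
    unfolding LCOSETS_def by auto
  then show ?thesis unfolding mark_def by simp
qed

lemma (in group) conj_mem_normal_iff:
  assumes "N \<lhd> G" "h \<in> carrier G" "l \<in> carrier G"
  shows "inv h \<otimes> l \<otimes> h \<in> N \<longleftrightarrow> l \<in> N"
proof
  assume "inv h \<otimes> l \<otimes> h \<in> N"
  then have "h \<otimes> (inv h \<otimes> l \<otimes> h) \<otimes> inv h \<in> N"
    using normal.inv_op_closed2[OF assms(1,2)] by blast
  then show "l \<in> N" using assms(2,3) by (simp add: m_assoc)
qed (use normal.inv_op_closed1[OF assms(1,2)] in blast)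

lemma (in group) mark_normal:
  assumes "N \<lhd> G" "L \<subseteq> carrier G"
  shows "mark G (carrier G) N L = (if L \<subseteq> N then card (lcosets N) else 0)"
  using assms conj_mem_normal_iff[OF assms(1)]
  by (intro mark_uniform) (auto simp: normal_def)

lemma (in group) conjset_subset_carrier:
  "H \<subseteq> carrier G \<Longrightarrow> g \<in> carrier G \<Longrightarrow> conjset G g H \<subseteq> carrier G"
  by (auto simp: conjset_def)

lemma (in group) mem_conjset_inv_iff:
  assumes "H \<subseteq> carrier G" "g \<in> carrier G" "y \<in> carrier G"
  shows "y \<in> conjset G (inv g) H \<longleftrightarrow> g \<otimes> y \<otimes> inv g \<in> H"
proof
  assume "y \<in> conjset G (inv g) H"
  then obtain x where "x \<in> H" "y = inv g \<otimes> x \<otimes> g" by (auto simp: conjset_def assms(2))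
  then show "g \<otimes> y \<otimes> inv g \<in> H" using assms by (simp add: m_assoc subsetD)
next
  assume "g \<otimes> y \<otimes> inv g \<in> H"
  moreover have "y = inv g \<otimes> (g \<otimes> y \<otimes> inv g) \<otimes> inv (inv g)" using assms by (simp add: m_assoc)
  ultimately show "y \<in> conjset G (inv g) H" unfolding conjset_def by blast
qed

lemma (in group) conjset_normal:
  assumes "N \<lhd> G" "g \<in> carrier G"
  shows "conjset G g N = N"
proof -
  have N: "N \<subseteq> carrier G" using assms(1) by (simp add: normal_def subgroup.subset)
  have "y \<in> conjset G (inv (inv g)) N \<longleftrightarrow> y \<in> N" if "y \<in> carrier G" for y
    using mem_conjset_inv_iff[OF N inv_closed[OF assms(2)] that] conj_mem_normal_iff[OF assms(1,2) that]
    by (simp add: assms(2))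
  then show ?thesis using conjset_subset_carrier[OF N assms(2)] N assms(2) by auto
qed

lemma (in group) l_coset_conjset:
  assumes "K \<subseteq> carrier G" "g \<in> carrier G" "h \<in> carrier G"
  shows "h <# conjset G g K = ((h \<otimes> g) <# K) #> inv g"
  unfolding l_coset_def r_coset_def conjset_def using assms by (auto simp: m_assoc subsetD)

lemma (in group) l_coset_fixed_r_coset_iff:
  assumes "C \<subseteq> carrier G" "g \<in> carrier G" "l \<in> carrier G"
  shows "l <# (C #> g) = C #> g \<longleftrightarrow> l <# C = C"
proof -
  have "l <# (C #> g) = (l <# C) #> g"
    unfolding l_coset_def r_coset_def using assms by (auto simp: m_assoc subsetD)
  moreover have "D #> g #> inv g = D" if "D \<subseteq> carrier G" for D
    using that assms(2) by (simp add: coset_mult_assoc)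
  ultimately show ?thesis using l_coset_subset_G[OF assms(1,3)] assms(1) by metis
qed

lemma (in group) mark_conjset:
  assumes K: "K \<subseteq> carrier G" and g: "g \<in> carrier G" and L: "L \<subseteq> carrier G"
  shows "mark G (carrier G) (conjset G g K) L = mark G (carrier G) K L"
proof -
  define fixed where "fixed K' = {C. (\<exists>h\<in>carrier G. C = h <# K') \<and> (\<forall>l\<in>L. l <# C = C)}" for K'
  have coset_carrier: "h <# K \<subseteq> carrier G" if "h \<in> carrier G" for h
    using l_coset_subset_G[OF K that] .
  have fixed_shift: "(\<forall>l\<in>L. l <# (h <# K #> inv g) = h <# K #> inv g) \<longleftrightarrow> (\<forall>l\<in>L. l <# (h <# K) = h <# K)"
    if "h \<in> carrier G" for h
    using l_coset_fixed_r_coset_iff[OF coset_carrier[OF that] inv_closed[OF g]] L by blast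
  have "fixed (conjset G g K) = (\<lambda>C. C #> inv g) ` fixed K"
  proof (intro equalityI subsetI)
    fix C' assume "C' \<in> fixed (conjset G g K)"
    then obtain h where "h \<in> carrier G" "C' = (h \<otimes> g) <# K #> inv g" "\<forall>l\<in>L. l <# C' = C'"
      unfolding fixed_def using l_coset_conjset[OF K g] by auto
    then show "C' \<in> (\<lambda>C. C #> inv g) ` fixed K"
      unfolding fixed_def using fixed_shift g by (auto intro!: imageI)
  next
    fix C' assume "C' \<in> (\<lambda>C. C #> inv g) ` fixed K"
    then obtain h where h: "h \<in> carrier G" "C' = h <# K #> inv g" "\<forall>l\<in>L. l <# (h <# K) = h <# K"
      unfolding fixed_def by auto
    have "C' = (h \<otimes> inv g) <# conjset G g K" using l_coset_conjset[OF K g, of "h \<otimes> inv g"] h g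
      by (simp add: m_assoc)
    moreover have "\<forall>l\<in>L. l <# C' = C'" using fixed_shift[OF h(1)] h(2,3) by simp
    ultimately show "C' \<in> fixed (conjset G g K)"
      unfolding fixed_def using h(1) g by blast
  qed
  moreover have "inj_on (\<lambda>C. C #> inv g) (fixed K)"
    by (rule inj_on_inverseI[of _ "\<lambda>C. C #> g"])
       (auto simp: fixed_def coset_mult_assoc g dest: coset_carrier)
  ultimately show ?thesis unfolding mark_def fixed_def[symmetric] by (simp add: card_image)
qed

lemma (in group) cls_conjset:
  "K \<subseteq> carrier G \<Longrightarrow> g \<in> carrier G \<Longrightarrow> cls G (carrier G) (conjset G g K) = cls G (carrier G) K"
  by (auto simp: cls_def subgrps_def mark_conjset fun_eq_iff)

lemma finite_subgrps: "finite (carrier G) \<Longrightarrow> finite (subgrps G H)"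
  unfolding subgrps_def by (rule finite_subset[of _ "Pow (carrier G)"]) (auto dest: subgroup.subset)

lemma cls_in_burnside:
  assumes "finite (carrier G)" "K \<in> subgrps G H"
  shows "cls G H K \<in> burnside G H"
  unfolding burnside_def
  by (rule CollectI, rule exI[of _ "\<lambda>K'. if K' = K then 1 else 0"])
     (simp add: finite_subgrps[OF assms(1)] assms(2) if_distrib[of "\<lambda>c. c * _"] cong: if_cong)

section \<open>The Mackey ideal generated by one element\<close>

lemma mackey_ideal_diff:
  assumes "(H, f) \<in> mackey_ideal G x" "(H, g) \<in> mackey_ideal G x"
  shows "(H, \<lambda>L. f L - g L) \<in> mackey_ideal G x"
  using mackey_ideal.add[OF assms(1) mackey_ideal.neg[OF assms(2)]] by simp

lemma mackey_ideal_zero: "(H, f) \<in> mackey_ideal G x \<Longrightarrow> (H, \<lambda>L. 0) \<in> mackey_ideal G x"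
  using mackey_ideal_diff[of H f G x f] by simp

lemma mackey_ideal_smult:
  assumes "(H, f) \<in> mackey_ideal G x"
  shows "(H, \<lambda>L. c * f L) \<in> mackey_ideal G x"
proof (induction c rule: int_induct[where k = 0])
  case base
  show ?case using mackey_ideal_zero[OF assms] by simp
next
  case (step1 i)
  show ?case using mackey_ideal.add[OF step1(2) assms] by (simp add: distrib_right)
next
  case (step2 i)
  show ?case using mackey_ideal_diff[OF step2(2) assms] by (simp add: left_diff_distrib)
qed

lemma (in group) mackey_ideal_vanishes_at_normal:
  assumes "(H, f) \<in> mackey_ideal G x" "N \<lhd> G" "x N = 0"
  shows "f N = 0"
  using assms(1)
proof (induction rule: mackey_ideal.induct)
  case (transf K f H)
  have "conjset G (inv h) N = N" if "h \<in> H" for h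
    using transf.hyps(3) that by (auto simp: subgrps_def intro!: conjset_normal[OF assms(2)])
  then show ?case using transf.IH by (simp add: tr_def)
next
  case (conjg H f g)
  then show ?case using conjset_normal[OF assms(2)] by (simp add: conjB_def)
qed (simp_all add: assms(3) res_def)

section \<open>The dihedral group\<close>

lemma dvd_div_self: "d dvd (m::nat) \<Longrightarrow> m div d dvd m"
  by (metis dvd_mult_div_cancel dvd_triv_right)

lemma card_multiples_below: "0 < (q::nat) \<Longrightarrow> card {j. j < q * d \<and> q dvd j} = d"
proof -
  assume q: "0 < q"
  have "{j. j < q * d \<and> q dvd j} = (\<lambda>t. q * t) ` {..<d}" using q by (auto elim!: dvdE)
  moreover have "inj_on (\<lambda>t. q * t) {..<d}" using q by (simp add: inj_on_def)
  ultimately show ?thesis by (simp add: card_image)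
qed

lemma int_subgroup_eq_multiples:
  fixes R :: "int set"
  assumes add: "\<And>a b. a \<in> R \<Longrightarrow> b \<in> R \<Longrightarrow> a + b \<in> R"
    and neg: "\<And>a. a \<in> R \<Longrightarrow> - a \<in> R"
    and m: "int m \<in> R" "0 < m"
  shows "\<exists>q. 0 < q \<and> q dvd m \<and> R = {z. int q dvd z}"
proof -
  have mult: "t * z \<in> R" if "z \<in> R" for t z
  proof (induction t rule: int_induct[where k = 0])
    case base
    show ?case using add[OF that neg[OF that]] by simp
  next
    case (step1 i)
    show ?case using add[OF step1(2) that] by (simp add: distrib_right)
  next
    case (step2 i)
    show ?case using add[OF step2(2) neg[OF that]] by (simp add: left_diff_distrib)
  qed
  define q where "q = (LEAST n. 0 < n \<and> int n \<in> R)"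
  have q: "0 < q" "int q \<in> R"
    using LeastI[of "\<lambda>n. 0 < n \<and> int n \<in> R" m] m unfolding q_def by auto
  have q_dvd: "int q dvd z" if "z \<in> R" for z
  proof (rule ccontr)
    assume "\<not> int q dvd z"
    then have pos: "0 < z mod int q" using q(1) by (simp add: dvd_eq_mod_eq_0 order_le_neq_trans)
    have "z + (- (z div int q)) * int q \<in> R" using add[OF that mult[OF q(2)]] .
    then have "int (nat (z mod int q)) \<in> R" using pos by (simp add: minus_div_mult_eq_mod)
    then have "q \<le> nat (z mod int q)"
      using pos Least_le[of "\<lambda>n. 0 < n \<and> int n \<in> R" "nat (z mod int q)"] unfolding q_def[symmetric]
      by simp
    moreover have "z mod int q < int q" using q(1) by simp
    ultimately show False using pos by (simp add: le_nat_iff)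
  qed
  have "R = {z. int q dvd z}"
    using q_dvd mult[OF q(2)] by (auto simp: mult.commute)
  then show ?thesis using q(1) q_dvd[OF m(1)] by auto
qed

lemma odd_exists_half_mod:
  assumes "odd m"
  shows "\<exists>s. int m dvd 2 * s + r"
proof -
  obtain k where m: "m = 2 * k + 1" using assms by (rule oddE)
  have "2 * (- r * (int k + 1)) + r = int m * (- r)" by (simp add: m algebra_simps)
  then show ?thesis by (metis dvd_triv_left)
qed

text \<open>\<zeta>^z \<tau>^e with an integer exponent z, so that the group law becomes integer arithmetic
  modulo m.\<close>

definition dihedral_elem :: "nat \<Rightarrow> int \<Rightarrow> bool \<Rightarrow> nat \<times> bool" where
  "dihedral_elem m z e = (nat (z mod int m), e)"

lemma dihedral_mult:
  "(a, e) \<otimes>\<^bsub>dihedral m\<^esub> (b, f) = ((if e then a + m - b else a + b) mod m, e \<noteq> f)"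
  by (simp add: dihedral_def)

lemma carrier_dihedral: "carrier (dihedral m) = {0..<m} \<times> UNIV"
  by (simp add: dihedral_def)

lemma one_dihedral: "\<one>\<^bsub>dihedral m\<^esub> = (0, False)"
  by (simp add: dihedral_def)

lemma dihedral_elem_mult:
  assumes "0 < m"
  shows "dihedral_elem m a e \<otimes>\<^bsub>dihedral m\<^esub> dihedral_elem m b f
           = dihedral_elem m (if e then a - b else a + b) (e \<noteq> f)"
proof -
  have b: "nat (b mod int m) < m" using assms by (simp add: nat_less_iff)
  have "int ((nat (a mod int m) + m - nat (b mod int m)) mod m) = (a - b) mod int m"
    using b assms by (simp add: of_nat_mod of_nat_diff diff_add_eq[symmetric] mod_diff_eq)
  moreover have "int ((nat (a mod int m) + nat (b mod int m)) mod m) = (a + b) mod int m"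
    using assms by (simp add: of_nat_mod mod_add_eq)
  ultimately show ?thesis
    unfolding dihedral_elem_def dihedral_mult by (simp add: nat_eq_iff2)
qed

lemma dihedral_elem_eq_iff:
  "0 < m \<Longrightarrow> dihedral_elem m a e = dihedral_elem m b f \<longleftrightarrow> a mod int m = b mod int m \<and> e = f"
  by (simp add: dihedral_elem_def eq_nat_nat_iff)

lemma dihedral_elem_in_carrier: "0 < m \<Longrightarrow> dihedral_elem m z e \<in> carrier (dihedral m)"
  by (simp add: dihedral_elem_def carrier_dihedral nat_less_iff)

lemma dihedral_elem_of_carrier:
  "x \<in> carrier (dihedral m) \<Longrightarrow> x = dihedral_elem m (int (fst x)) (snd x)"
  by (cases x) (simp add: dihedral_elem_def carrier_dihedral)

lemma group_dihedral:
  assumes "0 < m"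
  shows "group (dihedral m)"
proof (rule groupI)
  fix x y assume "x \<in> carrier (dihedral m)" "y \<in> carrier (dihedral m)"
  then show "x \<otimes>\<^bsub>dihedral m\<^esub> y \<in> carrier (dihedral m)"
    using assms by (cases x; cases y) (simp add: carrier_dihedral dihedral_mult)
next
  show "\<one>\<^bsub>dihedral m\<^esub> \<in> carrier (dihedral m)" using assms by (simp add: carrier_dihedral one_dihedral)
next
  fix x y z
  assume "x \<in> carrier (dihedral m)" "y \<in> carrier (dihedral m)" "z \<in> carrier (dihedral m)"
  then obtain a b c e f g where
    "x = dihedral_elem m a e" "y = dihedral_elem m b f" "z = dihedral_elem m c g"
    using dihedral_elem_of_carrier by metis
  then show "x \<otimes>\<^bsub>dihedral m\<^esub> y \<otimes>\<^bsub>dihedral m\<^esub> z = x \<otimes>\<^bsub>dihedral m\<^esub> (y \<otimes>\<^bsub>dihedral m\<^esub> z)"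
    by (cases e; cases f; cases g) (simp_all add: dihedral_elem_mult[OF assms] algebra_simps)
next
  have one: "\<one>\<^bsub>dihedral m\<^esub> = dihedral_elem m 0 False"
    by (simp add: one_dihedral dihedral_elem_def)
  fix x assume "x \<in> carrier (dihedral m)"
  then obtain a e where x: "x = dihedral_elem m a e" using dihedral_elem_of_carrier by metis
  show "\<one>\<^bsub>dihedral m\<^esub> \<otimes>\<^bsub>dihedral m\<^esub> x = x"
    unfolding one x by (simp add: dihedral_elem_mult[OF assms])
  show "\<exists>y\<in>carrier (dihedral m). y \<otimes>\<^bsub>dihedral m\<^esub> x = \<one>\<^bsub>dihedral m\<^esub>"
    using assms unfolding one x
    by (intro bexI[of _ "dihedral_elem m (if e then a else - a) e"])
       (auto simp: dihedral_elem_mult dihedral_elem_eq_iff dihedral_elem_in_carrier)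
qed

locale dihedral_group =
  fixes m :: nat
  assumes m_pos: "0 < m"

sublocale dihedral_group \<subseteq> group "dihedral m"
  by (rule group_dihedral[OF m_pos])

context dihedral_group
begin

abbreviation D where "D \<equiv> dihedral m"
abbreviation elem where "elem \<equiv> dihedral_elem m"
abbreviation cl where "cl K \<equiv> cls D (carrier D) K"

lemma elem_mult [simp]: "elem a e \<otimes>\<^bsub>D\<^esub> elem b f = elem (if e then a - b else a + b) (e \<noteq> f)"
  by (rule dihedral_elem_mult[OF m_pos])

lemma elem_closed [simp]: "elem z e \<in> carrier D"
  by (rule dihedral_elem_in_carrier[OF m_pos])

lemma finite_carrier_dihedral: "finite (carrier D)"
  by (simp add: carrier_dihedral)

lemma elem_eq_iff: "elem a e = elem b f \<longleftrightarrow> a mod int m = b mod int m \<and> e = f"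
  by (rule dihedral_elem_eq_iff[OF m_pos])

lemma one_eq_elem: "\<one>\<^bsub>D\<^esub> = elem 0 False"
  by (simp add: one_dihedral dihedral_elem_def)

lemma inv_elem [simp]: "inv\<^bsub>D\<^esub> (elem z e) = elem (if e then z else - z) e"
  by (rule inv_equality) (auto simp: one_eq_elem elem_eq_iff)

lemma elem_cases:
  assumes "x \<in> carrier D"
  obtains z e where "x = elem z e"
  using dihedral_elem_of_carrier[OF assms] by blast

lemma dihedral_set_eqI:
  assumes "A \<subseteq> carrier D" "B \<subseteq> carrier D" "\<And>z e. elem z e \<in> A \<longleftrightarrow> elem z e \<in> B"
  shows "A = B"
proof (intro equalityI subsetI)
  fix x assume "x \<in> A"
  then show "x \<in> B" using assms by (metis elem_cases subsetD)
next
  fix x assume "x \<in> B"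
  then show "x \<in> A" using assms by (metis elem_cases subsetD)
qed

lemma dvd_nat_mod_iff:
  assumes "q dvd m"
  shows "q dvd nat (z mod int m) \<longleftrightarrow> int q dvd z"
proof -
  have "q dvd nat (z mod int m) \<longleftrightarrow> int q dvd z mod int m"
    using m_pos by (simp flip: int_dvd_int_iff)
  also have "\<dots> \<longleftrightarrow> int q dvd z"
    using assms by (simp add: dvd_mod_iff)
  finally show ?thesis .
qed

lemma elem_in_mu_iff: "d dvd m \<Longrightarrow> elem z e \<in> mu m d \<longleftrightarrow> \<not> e \<and> int (m div d) dvd z"
  using m_pos by (auto simp: mu_def dihedral_elem_def dvd_nat_mod_iff dvd_div_self nat_less_iff)

lemma elem_in_dih_iff: "d dvd m \<Longrightarrow> elem z e \<in> dih m d \<longleftrightarrow> int (m div d) dvd z"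
  using m_pos by (auto simp: dih_def dihedral_elem_def dvd_nat_mod_iff dvd_div_self nat_less_iff)

lemma divisor_pos: "d dvd m \<Longrightarrow> 0 < d"
  using m_pos by (rule dvd_pos_nat)

lemma codivisor_pos: "d dvd m \<Longrightarrow> 0 < m div d"
  using m_pos by (rule dvd_pos_nat) (rule dvd_div_self)

lemma mu_subset_carrier: "mu m d \<subseteq> carrier D"
  by (auto simp: mu_def carrier_dihedral)

lemma dih_subset_carrier: "dih m d \<subseteq> carrier D"
  by (auto simp: dih_def carrier_dihedral)

lemma mu_subset_rotations: "mu m d \<subseteq> mu m m"
  by (auto simp: mu_def)

lemma dih_m_eq_carrier: "dih m m = carrier D"
  using m_pos by (auto simp: dih_def carrier_dihedral)

section \<open>Subgroups of D_2m and their marks\<close>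

lemma subgroup_dih:
  assumes "d dvd m"
  shows "subgroup (dih m d) D"
proof (rule subgroupI[OF dih_subset_carrier])
  show "dih m d \<noteq> {}" using elem_in_dih_iff[OF assms, of 0] by blast
next
  fix x assume "x \<in> dih m d"
  moreover obtain z e where "x = elem z e" using dih_subset_carrier \<open>x \<in> dih m d\<close> by (blast elim: elem_cases)
  ultimately show "inv\<^bsub>D\<^esub> x \<in> dih m d" by (simp add: elem_in_dih_iff[OF assms])
next
  fix x y assume "x \<in> dih m d" "y \<in> dih m d"
  moreover obtain z e z' e' where "x = elem z e" "y = elem z' e'"
    using dih_subset_carrier \<open>x \<in> dih m d\<close> \<open>y \<in> dih m d\<close> by (blast elim: elem_cases)
  ultimately show "x \<otimes>\<^bsub>D\<^esub> y \<in> dih m d" by (simp add: elem_in_dih_iff[OF assms])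
qed

lemma normal_mu:
  assumes "d dvd m"
  shows "mu m d \<lhd> D"
proof (rule normal_inv_iff[THEN iffD2], intro conjI ballI)
  show "subgroup (mu m d) D"
  proof (rule subgroupI[OF mu_subset_carrier])
    show "mu m d \<noteq> {}" using elem_in_mu_iff[OF assms, of 0] by blast
  next
    fix x assume "x \<in> mu m d"
    moreover obtain z e where "x = elem z e" using mu_subset_carrier \<open>x \<in> mu m d\<close> by (blast elim: elem_cases)
    ultimately show "inv\<^bsub>D\<^esub> x \<in> mu m d" by (simp add: elem_in_mu_iff[OF assms])
  next
    fix x y assume "x \<in> mu m d" "y \<in> mu m d"
    moreover obtain z e z' e' where "x = elem z e" "y = elem z' e'"
      using mu_subset_carrier \<open>x \<in> mu m d\<close> \<open>y \<in> mu m d\<close> by (blast elim: elem_cases)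
    ultimately show "x \<otimes>\<^bsub>D\<^esub> y \<in> mu m d" by (simp add: elem_in_mu_iff[OF assms])
  qed
next
  fix g x assume "g \<in> carrier D" "x \<in> mu m d"
  moreover obtain t e z e' where "g = elem t e" "x = elem z e'"
    using mu_subset_carrier \<open>g \<in> carrier D\<close> \<open>x \<in> mu m d\<close> by (blast elim: elem_cases)
  ultimately show "g \<otimes>\<^bsub>D\<^esub> x \<otimes>\<^bsub>D\<^esub> inv\<^bsub>D\<^esub> g \<in> mu m d"
    by (cases e) (simp_all add: elem_in_mu_iff[OF assms])
qed

lemma subgroup_mu: "d dvd m \<Longrightarrow> subgroup (mu m d) D"
  using normal_mu by (simp add: normal_def)

lemma rotation_in_dih_iff:
  assumes "d dvd m" "x \<in> mu m m"
  shows "x \<in> dih m d \<longleftrightarrow> x \<in> mu m d"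
proof -
  obtain z e where "x = elem z e" using assms(2) mu_subset_carrier by (blast elim: elem_cases)
  then show ?thesis using assms by (simp add: elem_in_mu_iff elem_in_dih_iff)
qed

lemma card_mu: "d dvd m \<Longrightarrow> card (mu m d) = d"
proof -
  assume d: "d dvd m"
  have "mu m d = {j. j < m div d * d \<and> m div d dvd j} \<times> {False}"
    using d by (auto simp: mu_def)
  then show ?thesis using codivisor_pos[OF d] by (simp add: card_cartesian_product card_multiples_below)
qed

lemma card_dih: "d dvd m \<Longrightarrow> card (dih m d) = 2 * d"
proof -
  assume d: "d dvd m"
  have "dih m d = (\<lambda>(j, e). j) ` mu m d \<times> UNIV"
    by (auto simp: mu_def dih_def image_iff)
  moreover have "card ((\<lambda>(j, e). j) ` mu m d) = card (mu m d)"
    by (rule card_image) (auto simp: mu_def inj_on_def)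
  ultimately show ?thesis by (simp add: card_cartesian_product card_mu[OF d])
qed

lemma order_dihedral: "order D = 2 * m"
  by (simp add: order_def carrier_dihedral card_cartesian_product)

lemma index_mu: "d dvd m \<Longrightarrow> card (lcosets\<^bsub>D\<^esub> (mu m d)) = 2 * (m div d)"
proof -
  assume d: "d dvd m"
  have "card (lcosets\<^bsub>D\<^esub> (mu m d)) * d = 2 * (m div d) * d"
    using l_lagrange[OF _ subgroup_mu[OF d]] d by (simp add: order_dihedral card_mu carrier_dihedral)
  then show ?thesis using divisor_pos[OF d] by simp
qed

lemma index_dih: "d dvd m \<Longrightarrow> card (lcosets\<^bsub>D\<^esub> (dih m d)) = m div d"
proof -
  assume d: "d dvd m"
  have "card (lcosets\<^bsub>D\<^esub> (dih m d)) * d = m"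
    using l_lagrange[OF _ subgroup_dih[OF d]] by (simp add: order_dihedral card_dih[OF d] carrier_dihedral)
  then show ?thesis using divisor_pos[OF d] by (metis div_mult_self_is_m)
qed

lemma subgrps_carrierD: "L \<in> subgrps D (carrier D) \<Longrightarrow> L \<subseteq> carrier D"
  by (simp add: subgrps_def)

lemma mu_in_subgrps: "d dvd m \<Longrightarrow> mu m d \<in> subgrps D (carrier D)"
  by (simp add: subgrps_def subgroup_mu mu_subset_carrier)

lemma dih_in_subgrps: "d dvd m \<Longrightarrow> dih m d \<in> subgrps D (carrier D)"
  by (simp add: subgrps_def subgroup_dih dih_subset_carrier)

lemma cls_mu:
  assumes "d dvd m" "L \<in> subgrps D (carrier D)"
  shows "cl (mu m d) L = (if L \<subseteq> mu m d then 2 * int (m div d) else 0)"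
  using mark_normal[OF normal_mu[OF assms(1)] subgrps_carrierD[OF assms(2)]] assms
  by (simp add: cls_def index_mu)

lemma cls_carrier:
  assumes "L \<in> subgrps D (carrier D)"
  shows "cl (carrier D) L = 1"
  using mark_normal[OF normal_self subgrps_carrierD[OF assms]] index_dih[of m] m_pos assms
  by (simp add: cls_def dih_m_eq_carrier subgrps_carrierD)

lemma cls_dih_at_rotations:
  assumes "d dvd m" "L \<in> subgrps D (carrier D)" "L \<subseteq> mu m m"
  shows "cl (dih m d) L = (if L \<subseteq> mu m d then int (m div d) else 0)"
proof -
  have "(\<forall>l\<in>L. inv\<^bsub>D\<^esub> h \<otimes>\<^bsub>D\<^esub> l \<otimes>\<^bsub>D\<^esub> h \<in> dih m d) \<longleftrightarrow> L \<subseteq> mu m d"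
    if "h \<in> carrier D" for h
  proof -
    have "inv\<^bsub>D\<^esub> h \<otimes>\<^bsub>D\<^esub> l \<otimes>\<^bsub>D\<^esub> h \<in> dih m d \<longleftrightarrow> l \<in> mu m d" if "l \<in> L" for l
    proof -
      have l: "l \<in> mu m m" "l \<in> carrier D" using that assms(3) mu_subset_carrier by auto
      have "inv\<^bsub>D\<^esub> h \<otimes>\<^bsub>D\<^esub> l \<otimes>\<^bsub>D\<^esub> h \<in> mu m m"
        using conj_mem_normal_iff[OF normal_mu[OF dvd_refl] \<open>h \<in> carrier D\<close> l(2)] l(1) by blast
      then show ?thesis
        using rotation_in_dih_iff[OF assms(1)] conj_mem_normal_iff[OF normal_mu[OF assms(1)] \<open>h \<in> carrier D\<close> l(2)]
        by blast
    qed
    then show ?thesis by blast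
  qed
  then have "mark D (carrier D) (dih m d) L = (if L \<subseteq> mu m d then m div d else 0)"
    using mark_uniform[OF subgroup_dih[OF assms(1)] subgrps_carrierD[OF assms(2)]] index_dih[OF assms(1)]
    by simp
  then show ?thesis using assms(2) by (simp add: cls_def)
qed

lemma rotations_of_subgroup:
  assumes "subgroup K D"
  obtains d where "d dvd m" "\<And>z. elem z False \<in> K \<longleftrightarrow> int (m div d) dvd z"
proof -
  have "\<exists>q. 0 < q \<and> q dvd m \<and> {z. elem z False \<in> K} = {z. int q dvd z}"
  proof (rule int_subgroup_eq_multiples)
    show "a + b \<in> {z. elem z False \<in> K}"
      if "a \<in> {z. elem z False \<in> K}" "b \<in> {z. elem z False \<in> K}" for a b
      using subgroup.m_closed[OF assms, of "elem a False" "elem b False"] that by simp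
    show "- a \<in> {z. elem z False \<in> K}" if "a \<in> {z. elem z False \<in> K}" for a
      using subgroup.m_inv_closed[OF assms, of "elem a False"] that by simp
    have "elem (int m) False = \<one>\<^bsub>D\<^esub>" by (simp add: one_eq_elem elem_eq_iff)
    then show "int m \<in> {z. elem z False \<in> K}" using subgroup.one_closed[OF assms] by simp
  qed (rule m_pos)
  then obtain q where q: "0 < q" "q dvd m" "\<And>z. elem z False \<in> K \<longleftrightarrow> int q dvd z"
    by (auto simp: set_eq_iff)
  have "m div (m div q) = q" using q m_pos by (simp add: div_div_eq_right)
  then show ?thesis using that[OF dvd_div_self[OF q(2)]] q(3) by simp
qed

lemma subgroup_of_rotations_eq_mu:
  assumes "subgroup K D" "K \<subseteq> mu m m"
  obtains d where "d dvd m" "K = mu m d"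
proof -
  obtain d where d: "d dvd m" "\<And>z. elem z False \<in> K \<longleftrightarrow> int (m div d) dvd z"
    using rotations_of_subgroup[OF assms(1)] by blast
  have "K = mu m d"
  proof (rule dihedral_set_eqI[OF subgroup.subset[OF assms(1)] mu_subset_carrier])
    show "elem z e \<in> K \<longleftrightarrow> elem z e \<in> mu m d" for z e
      using assms(2) d by (cases e) (auto simp: elem_in_mu_iff)
  qed
  then show ?thesis using d(1) that by blast
qed

lemma reflections_of_subgroup:
  assumes "subgroup K D" "elem r True \<in> K"
  shows "elem z True \<in> K \<longleftrightarrow> elem (z - r) False \<in> K"
  using subgroup.m_closed[OF assms(1) _ assms(2), of "elem z True"]
    subgroup.m_closed[OF assms(1) _ assms(2), of "elem (z - r) False"] by auto

lemma elem_in_conj_dih_iff: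
  assumes "d dvd m"
  shows "elem z e \<in> conjset D (elem (- s) False) (dih m d)
           \<longleftrightarrow> int (m div d) dvd (if e then 2 * s + z else z)"
proof -
  have "elem z e \<in> conjset D (elem (- s) False) (dih m d)
      \<longleftrightarrow> elem s False \<otimes>\<^bsub>D\<^esub> elem z e \<otimes>\<^bsub>D\<^esub> inv\<^bsub>D\<^esub> (elem s False) \<in> dih m d"
    using mem_conjset_inv_iff[OF dih_subset_carrier, of "elem s False" "elem z e"] by simp
  also have "elem s False \<otimes>\<^bsub>D\<^esub> elem z e \<otimes>\<^bsub>D\<^esub> inv\<^bsub>D\<^esub> (elem s False)
      = elem (if e then 2 * s + z else z) e"
    by (cases e) (simp_all add: elem_eq_iff algebra_simps)
  finally show ?thesis by (simp add: elem_in_dih_iff[OF assms])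
qed

section \<open>The quotient by 2 - [D_2m/\<mu>_m]\<close>

definition relator :: "(nat \<times> bool) set \<Rightarrow> int" where
  "relator = (\<lambda>L. 2 * cl (carrier D) L - cl (mu m m) L)"

lemma relator_at_rotations: "L \<in> subgrps D (carrier D) \<Longrightarrow> L \<subseteq> mu m m \<Longrightarrow> relator L = 0"
  using m_pos by (simp add: relator_def cls_carrier cls_mu)

lemma relator_at_reflections: "L \<in> subgrps D (carrier D) \<Longrightarrow> \<not> L \<subseteq> mu m m \<Longrightarrow> relator L = 2"
  by (simp add: relator_def cls_carrier cls_mu)

lemma mu_relation:
  assumes "d dvd m"
  shows "(carrier D, \<lambda>L. cl (mu m d) L - 2 * cl (dih m d) L) \<in> mackey_ideal D relator"
proof -
  have "(carrier D, \<lambda>L. - (cl (dih m d) L * relator L)) \<in> mackey_ideal D relator"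
    by (intro mackey_ideal.neg mackey_ideal.mult[OF mackey_ideal.base] cls_in_burnside
        dih_in_subgrps assms finite_carrier_dihedral)
  moreover have "- (cl (dih m d) L * relator L) = cl (mu m d) L - 2 * cl (dih m d) L" for L
  proof (cases "L \<in> subgrps D (carrier D)")
    case L: True
    show ?thesis
    proof (cases "L \<subseteq> mu m m")
      case True
      then show ?thesis using L assms by (simp add: relator_at_rotations cls_mu cls_dih_at_rotations)
    next
      case False
      then have "\<not> L \<subseteq> mu m d" using mu_subset_rotations by blast
      then show ?thesis using L False assms by (simp add: relator_at_reflections cls_mu)
    qed
  qed (simp add: cls_def)
  ultimately show ?thesis by simp
qed

lemma mackey_ideal_vanishes_at_mu:
  assumes "(H, f) \<in> mackey_ideal D relator" "d dvd m"
  shows "f (mu m d) = 0"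
  by (rule mackey_ideal_vanishes_at_normal[OF assms(1) normal_mu[OF assms(2)]])
     (simp add: relator_at_rotations mu_in_subgrps[OF assms(2)] mu_subset_rotations)

lemma mu_subset_mu_imp_le: "d dvd m \<Longrightarrow> k dvd m \<Longrightarrow> mu m d \<subseteq> mu m k \<Longrightarrow> d \<le> k"
  by (metis card_mono card_mu finite_subset mu_subset_carrier finite_carrier_dihedral)

lemma dih_marks_triangular:
  assumes zero: "\<And>d. d dvd m \<Longrightarrow> (\<Sum>k | k dvd m. e k * cl (dih m k) (mu m d)) = 0"
    and "k dvd m"
  shows "e k = 0"
proof (rule ccontr)
  assume "e k \<noteq> 0"
  define S where "S = {k. k dvd m \<and> e k \<noteq> 0}"
  have "finite S" using m_pos by (simp add: S_def)
  define d where "d = Max S"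
  have "d \<in> S" unfolding d_def using \<open>finite S\<close> \<open>e k \<noteq> 0\<close> assms(2) by (intro Max_in) (auto simp: S_def)
  then have d: "d dvd m" "e d \<noteq> 0" by (auto simp: S_def)
  have summand: "e k' * cl (dih m k') (mu m d) = (if k' = d then e d * int (m div d) else 0)"
    if "k' dvd m" for k'
  proof (cases "k' = d")
    case True
    then show ?thesis
      using cls_dih_at_rotations[OF d(1) mu_in_subgrps[OF d(1)] mu_subset_rotations] by simp
  next
    case False
    have "\<not> mu m d \<subseteq> mu m k' \<or> e k' = 0"
    proof (rule disjCI)
      assume "e k' \<noteq> 0"
      then have "k' \<le> d" unfolding d_def using \<open>finite S\<close> that by (simp add: S_def)
      then show "\<not> mu m d \<subseteq> mu m k'" using False mu_subset_mu_imp_le[OF d(1) that] by auto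
    qed
    then show ?thesis
      using cls_dih_at_rotations[OF that mu_in_subgrps[OF d(1)] mu_subset_rotations] False by auto
  qed
  have "(\<Sum>k | k dvd m. e k * cl (dih m k) (mu m d)) = (\<Sum>k | k dvd m. if k = d then e d * int (m div d) else 0)"
    by (rule sum.cong) (simp_all add: summand)
  also have "\<dots> = e d * int (m div d)"
    using m_pos d(1) by simp
  finally show False using zero[OF d(1)] d(2) codivisor_pos[OF d(1)] by simp
qed

text \<open>c k is the coefficient of [D_2m/D_2k] in the image of a in R_m(D_2m/D_2m).\<close>

definition dih_coordinates :: "((nat \<times> bool) set \<Rightarrow> int) \<Rightarrow> (nat \<Rightarrow> int) \<Rightarrow> bool" where
  "dih_coordinates a c \<longleftrightarrow> (\<forall>k. \<not> k dvd m \<longrightarrow> c k = 0) \<and>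
     (carrier D, \<lambda>L. a L - (\<Sum>k | k dvd m. c k * cl (dih m k) L)) \<in> mackey_ideal D relator"

lemma dih_coordinates_unique:
  assumes "dih_coordinates a c" "dih_coordinates a c'"
  shows "c = c'"
proof
  have "(carrier D, \<lambda>L. \<Sum>k | k dvd m. (c' k - c k) * cl (dih m k) L) \<in> mackey_ideal D relator"
    using mackey_ideal_diff[of "carrier D" _ D relator] assms
    by (fastforce simp: dih_coordinates_def left_diff_distrib sum_subtractf)
  then have "c' k - c k = 0" if "k dvd m" for k
    using dih_marks_triangular[of "\<lambda>k. c' k - c k", OF _ that] mackey_ideal_vanishes_at_mu by fastforce
  then show "c k = c' k" for k using assms by (cases "k dvd m") (auto simp: dih_coordinates_def)
qed

lemma dih_coordinates_zero: "dih_coordinates (\<lambda>L. 0) (\<lambda>k. 0)"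
  using mackey_ideal_zero[OF mackey_ideal.base] by (simp add: dih_coordinates_def)

lemma dih_coordinates_lincomb:
  assumes "dih_coordinates a c" "dih_coordinates a' c'"
  shows "dih_coordinates (\<lambda>L. t * a L + a' L) (\<lambda>k. t * c k + c' k)"
proof -
  have "(carrier D, \<lambda>L. t * (a L - (\<Sum>k | k dvd m. c k * cl (dih m k) L))
      + (a' L - (\<Sum>k | k dvd m. c' k * cl (dih m k) L))) \<in> mackey_ideal D relator"
    using assms unfolding dih_coordinates_def by (intro mackey_ideal.add mackey_ideal_smult) auto
  moreover have "t * (a L - (\<Sum>k | k dvd m. c k * cl (dih m k) L))
      + (a' L - (\<Sum>k | k dvd m. c' k * cl (dih m k) L))
      = t * a L + a' L - (\<Sum>k | k dvd m. (t * c k + c' k) * cl (dih m k) L)" for L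
    by (simp add: algebra_simps sum.distrib sum_distrib_left)
  ultimately show ?thesis using assms by (simp add: dih_coordinates_def)
qed

lemma sum_divisors_delta:
  "d dvd m \<Longrightarrow> (\<Sum>k | k dvd m. (if k = d then t else 0) * f k) = (t :: 'a :: semiring_0) * f d"
  using m_pos by (simp add: if_distrib[of "\<lambda>c. c * _"] cong: if_cong)

lemma dih_coordinates_dih: "d dvd m \<Longrightarrow> dih_coordinates (cl (dih m d)) (\<lambda>k. if k = d then 1 else 0)"
  using mackey_ideal_zero[OF mackey_ideal.base] by (auto simp: dih_coordinates_def sum_divisors_delta)

lemma dih_coordinates_mu: "d dvd m \<Longrightarrow> dih_coordinates (cl (mu m d)) (\<lambda>k. if k = d then 2 else 0)"
  using mu_relation by (auto simp: dih_coordinates_def sum_divisors_delta)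

end

locale odd_dihedral_group = dihedral_group +
  assumes odd_m: "odd m"
begin

text \<open>Oddness of m enters only here: 2 is invertible modulo m, so conjugation by a suitable
  rotation moves the reflections of K into D_2d.\<close>

lemma subgroup_with_reflection_conj_dih:
  assumes "subgroup K D" "\<not> K \<subseteq> mu m m"
  obtains d g where "d dvd m" "g \<in> carrier D" "K = conjset D g (dih m d)"
proof -
  obtain d where d: "d dvd m" and rotations: "\<And>z. elem z False \<in> K \<longleftrightarrow> int (m div d) dvd z"
    using rotations_of_subgroup[OF assms(1)] by blast
  obtain r where r: "elem r True \<in> K"
  proof -
    obtain x where x: "x \<in> K" "x \<notin> mu m m" using assms(2) by blast
    moreover obtain z e where "x = elem z e"
      using x(1) subgroup.subset[OF assms(1)] by (blast elim: elem_cases)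
    ultimately show ?thesis using that m_pos by (cases e) (auto simp: elem_in_mu_iff)
  qed
  obtain s where "int m dvd 2 * s + r" using odd_exists_half_mod[OF odd_m] by blast
  then have s: "int (m div d) dvd 2 * s + r"
    using dvd_div_self[OF d] by (metis dvd_trans int_dvd_int_iff)
  have "K = conjset D (elem (- s) False) (dih m d)"
  proof (rule dihedral_set_eqI[OF subgroup.subset[OF assms(1)]])
    show "conjset D (elem (- s) False) (dih m d) \<subseteq> carrier D"
      by (simp add: conjset_subset_carrier dih_subset_carrier)
    have "int (m div d) dvd 2 * s + z \<longleftrightarrow> int (m div d) dvd z - r" for z
      using dvd_add_right_iff[OF s, of "z - r"] by (simp add: algebra_simps)
    then show "elem z e \<in> K \<longleftrightarrow> elem z e \<in> conjset D (elem (- s) False) (dih m d)" for z e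
      using rotations reflections_of_subgroup[OF assms(1) r]
      by (cases e) (simp_all add: elem_in_conj_dih_iff[OF d])
  qed
  then show ?thesis by (rule that[OF d, rotated]) simp
qed

lemma cls_has_dih_coordinates:
  assumes "K \<in> subgrps D (carrier D)"
  shows "\<exists>c. dih_coordinates (cl K) c"
proof -
  have K: "subgroup K D" using assms by (simp add: subgrps_def)
  show ?thesis
  proof (cases "K \<subseteq> mu m m")
    case True
    then obtain d where "d dvd m" "K = mu m d" using subgroup_of_rotations_eq_mu[OF K] by blast
    then show ?thesis using dih_coordinates_mu by blast
  next
    case False
    then obtain d g where "d dvd m" "g \<in> carrier D" "K = conjset D g (dih m d)"
      using subgroup_with_reflection_conj_dih[OF K] by blast
    then show ?thesis using dih_coordinates_dih by (auto simp: cls_conjset dih_subset_carrier)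
  qed
qed

lemma burnside_has_dih_coordinates:
  assumes "a \<in> burnside D (carrier D)"
  shows "\<exists>c. dih_coordinates a c"
proof -
  obtain b where a: "a = (\<lambda>L. \<Sum>K\<in>subgrps D (carrier D). b K * cl K L)"
    using assms by (auto simp: burnside_def)
  have "\<exists>c. dih_coordinates (\<lambda>L. \<Sum>K\<in>T. b K * cl K L) c" if "finite T" "T \<subseteq> subgrps D (carrier D)" for T
    using that
  proof (induction T rule: finite_induct)
    case empty
    show ?case using dih_coordinates_zero by auto
  next
    case (insert K T)
    obtain c c' where "dih_coordinates (cl K) c" "dih_coordinates (\<lambda>L. \<Sum>K\<in>T. b K * cl K L) c'"
      using insert cls_has_dih_coordinates by blast
    then show ?case using dih_coordinates_lincomb insert.hyps by fastforce
  qed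
  then show ?thesis unfolding a using finite_subgrps[OF finite_carrier_dihedral] by blast
qed

end

theorem corollary8p20:
  fixes m :: nat
  assumes "odd m"
  defines "G \<equiv> dihedral m"
  defines "I \<equiv> {f. (carrier G, f) \<in>
              mackey_ideal G (\<lambda>L. 2 * cls G (carrier G) (carrier G) L - cls G (carrier G) (mu m m) L)}"
  shows "(\<forall>a \<in> burnside G (carrier G). \<exists>!c :: nat \<Rightarrow> int. (\<forall>k. \<not> k dvd m \<longrightarrow> c k = 0) \<and>
            (\<lambda>L. a L - (\<Sum>k\<in>{k. k dvd m}. c k * cls G (carrier G) (dih m k) L)) \<in> I)
       \<and> (\<forall>k. k dvd m \<longrightarrow> (\<lambda>L. cls G (carrier G) (mu m k) L - 2 * cls G (carrier G) (dih m k) L) \<in> I)"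
proof -
  interpret odd_dihedral_group m
    using assms(1) by unfold_locales (simp_all add: odd_pos)
  have "\<exists>!c. dih_coordinates a c" if "a \<in> burnside D (carrier D)" for a
    using burnside_has_dih_coordinates[OF that] dih_coordinates_unique by blast
  then show ?thesis
    using mu_relation unfolding G_def I_def mem_Collect_eq dih_coordinates_def relator_def by blast
qed

end
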